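(* Let $\mathcal A\subseteq\mathrm{Mat}(\mathbb{Z}^D,p)$ be a VS $*$-subalgebra with range $\ell$, and let $S\subseteq\mathbb{Z}^D$ be any set of sites. Then every central element $z$ of $\mathcal A\cap\mathrm{Mat}(S,p)$ is supported on $(\mathbb{Z}^D\setminus S)^{+2\ell}\cap S$.
   Context: For $p:\mathbb{Z}^D\to\mathbb{Z}_{>0}$ and finite $F$, $\mathrm{Mat}(F,p)=\bigotimes_{s\in F}M_{p(s)}(\mathbb{C})$ with embeddings by tensoring identities; $\mathrm{Mat}(\mathbb{Z}^D,p)$ is the union, and for arbitrary $S$, $\mathrm{Mat}(S,p)$ is the union of $\mathrm{Mat}(F,p)$ over finite $F\subseteq S$. $\mathrm{Supp}(x)$ is the smallest finite set $F$ with $x\in\mathrm{Mat}(F,p)$ (empty for scalars); "supported on $T$" means $\mathrm{Supp}(x)\subseteq T$. $T^{+\ell}$ is the set of sites at $\ell_\infty$-distance at most $\ell$ from $T$. A $*$-subalgebra $\mathcal A$ is VS with range $\ell>0$ if for every $a\in\mathcal A\setminus\mathbb{C}\mathbf 1$ and every $s\in\mathrm{Supp}(a)$ there is $w\in\mathcal A\cap\mathrm{Mat}(\{s\}^{+\ell},p)$ with $[a,w]\ne0$. *)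

theory Defs
  imports Complex_Main
begin

text \<open>Sites of the lattice Z^D are functions 'd => int for a finite (nonempty) index
type 'd, so D = CARD('d).
Mat(Z^D,p) is modelled concretely: an element of Mat(F,p) (F finite) is identified with
the kernel on global configurations (sigma s < p s for all s) given by
  k sigma tau = m (sigma|F) (tau|F)  if sigma, tau agree off F, and 0 otherwise,
i.e. x tensor identity. This is an injective *-homomorphic image of the inductive limit,
compatible with the embeddings by tensoring identities.\<close>

type_synonym 'd site = "'d \<Rightarrow> int"
type_synonym 'd cfg = "'d site \<Rightarrow> nat"
type_synonym 'd op = "'d cfg \<Rightarrow> 'd cfg \<Rightarrow> complex"

definition cfgs :: "('d site \<Rightarrow> nat) \<Rightarrow> 'd cfg set" where
  "cfgs p = {\<sigma>. \<forall>s. \<sigma> s < p s}"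

definition restr :: "'d cfg \<Rightarrow> 'd site set \<Rightarrow> 'd cfg" where
  "restr \<sigma> F = (\<lambda>s. if s \<in> F then \<sigma> s else 0)"

definition MatF :: "('d site \<Rightarrow> nat) \<Rightarrow> 'd site set \<Rightarrow> 'd op set" where
  "MatF p F = {k. \<exists>m :: 'd cfg \<Rightarrow> 'd cfg \<Rightarrow> complex. \<forall>\<sigma> \<tau>.
      k \<sigma> \<tau> = (if \<sigma> \<in> cfgs p \<and> \<tau> \<in> cfgs p \<and> (\<forall>s. s \<notin> F \<longrightarrow> \<sigma> s = \<tau> s)
                 then m (restr \<sigma> F) (restr \<tau> F) else 0)}"

definition Mat :: "('d site \<Rightarrow> nat) \<Rightarrow> 'd site set \<Rightarrow> 'd op set" where
  "Mat p S = (\<Union>F\<in>{F. finite F \<and> F \<subseteq> S}. MatF p F)"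

text \<open>Algebra operations on kernels (the sum is finite for local kernels).\<close>
definition opmult :: "('d site \<Rightarrow> nat) \<Rightarrow> 'd op \<Rightarrow> 'd op \<Rightarrow> 'd op" where
  "opmult p a b = (\<lambda>\<sigma> \<tau>. \<Sum>\<rho>\<in>{\<rho>\<in>cfgs p. a \<sigma> \<rho> \<noteq> 0}. a \<sigma> \<rho> * b \<rho> \<tau>)"

definition opadj :: "'d op \<Rightarrow> 'd op" where
  "opadj a = (\<lambda>\<sigma> \<tau>. cnj (a \<tau> \<sigma>))"

definition opadd :: "'d op \<Rightarrow> 'd op \<Rightarrow> 'd op" where
  "opadd a b = (\<lambda>\<sigma> \<tau>. a \<sigma> \<tau> + b \<sigma> \<tau>)"

definition opscale :: "complex \<Rightarrow> 'd op \<Rightarrow> 'd op" where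
  "opscale c a = (\<lambda>\<sigma> \<tau>. c * a \<sigma> \<tau>)"

definition opzero :: "'d op" where
  "opzero = (\<lambda>\<sigma> \<tau>. 0)"

definition commutator :: "('d site \<Rightarrow> nat) \<Rightarrow> 'd op \<Rightarrow> 'd op \<Rightarrow> 'd op" where
  "commutator p a b = (\<lambda>\<sigma> \<tau>. opmult p a b \<sigma> \<tau> - opmult p b a \<sigma> \<tau>)"

definition scalars :: "('d site \<Rightarrow> nat) \<Rightarrow> 'd op set" where
  "scalars p = MatF p {}"

definition Supp :: "('d site \<Rightarrow> nat) \<Rightarrow> 'd op \<Rightarrow> 'd site set" where
  "Supp p x = (THE F. finite F \<and> x \<in> MatF p F \<and>
                      (\<forall>G. finite G \<and> x \<in> MatF p G \<longrightarrow> F \<subseteq> G))"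

definition dinf :: "('d::finite) site \<Rightarrow> 'd site \<Rightarrow> int" where
  "dinf s t = Max (range (\<lambda>i. \<bar>s i - t i\<bar>))"

definition thicken :: "('d::finite) site set \<Rightarrow> real \<Rightarrow> 'd site set" where
  "thicken T l = {t. \<exists>u\<in>T. real_of_int (dinf t u) \<le> l}"

definition star_subalgebra :: "('d site \<Rightarrow> nat) \<Rightarrow> 'd op set \<Rightarrow> bool" where
  "star_subalgebra p A \<longleftrightarrow> A \<subseteq> Mat p UNIV \<and> opzero \<in> A \<and>
     (\<forall>a\<in>A. \<forall>b\<in>A. opadd a b \<in> A \<and> opmult p a b \<in> A) \<and>
     (\<forall>c. \<forall>a\<in>A. opscale c a \<in> A) \<and> (\<forall>a\<in>A. opadj a \<in> A)"

definition VS :: "('d::finite site \<Rightarrow> nat) \<Rightarrow> 'd op set \<Rightarrow> real \<Rightarrow> bool" where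
  "VS p A l \<longleftrightarrow> star_subalgebra p A \<and> l > 0 \<and>
     (\<forall>a\<in>A - scalars p. \<forall>s\<in>Supp p a.
        \<exists>w\<in>A \<inter> Mat p (thicken {s} l). commutator p a w \<noteq> opzero)"

end

theory Submission
  imports Defs
begin

text \<open>If a site s of the support of z had its whole l-neighbourhood inside S, then the
witness w that the VS property provides for s would lie in A \<inter> Mat(S,p), so it would
commute with the central element z, contradicting the choice of w. Hence Supp z lies
within distance l, in particular 2l, of the complement of S; it lies in S because
z \<in> Mat(S,p) and Mat(F,p) \<inter> Mat(G,p) = Mat(F \<inter> G,p), which also makes the least
support well defined.\<close>

lemma restr_in_cfgs:
  assumes "\<forall>s. p s > 0" and "\<sigma> \<in> cfgs p"
  shows "restr \<sigma> F \<in> cfgs p"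
  using assms unfolding cfgs_def restr_def by auto

lemma restr_restr [simp]: "restr (restr \<sigma> F) G = restr \<sigma> (F \<inter> G)"
  unfolding restr_def by auto

lemma MatF_eq_restr:
  assumes "\<forall>s. p s > 0" and "k \<in> MatF p F"
    and "\<sigma> \<in> cfgs p" "\<tau> \<in> cfgs p" "\<forall>s. s \<notin> F \<longrightarrow> \<sigma> s = \<tau> s"
  shows "k \<sigma> \<tau> = k (restr \<sigma> F) (restr \<tau> F)"
proof -
  obtain m where m: "\<And>\<sigma> \<tau>. k \<sigma> \<tau> = (if \<sigma> \<in> cfgs p \<and> \<tau> \<in> cfgs p \<and> (\<forall>s. s \<notin> F \<longrightarrow> \<sigma> s = \<tau> s)
                 then m (restr \<sigma> F) (restr \<tau> F) else 0)"
    using assms(2) unfolding MatF_def by blast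
  have "\<forall>s. s \<notin> F \<longrightarrow> restr \<sigma> F s = restr \<tau> F s"
    unfolding restr_def by auto
  then show ?thesis
    using m[of \<sigma> \<tau>] m[of "restr \<sigma> F" "restr \<tau> F"] assms(3-5)
      restr_in_cfgs[OF assms(1)] by simp
qed

lemma MatF_vanishes:
  assumes "k \<in> MatF p F" and "\<not> (\<sigma> \<in> cfgs p \<and> \<tau> \<in> cfgs p \<and> (\<forall>s. s \<notin> F \<longrightarrow> \<sigma> s = \<tau> s))"
  shows "k \<sigma> \<tau> = 0"
  using assms unfolding MatF_def by auto

lemma MatF_Int:
  assumes p: "\<forall>s. p s > 0" and kF: "k \<in> MatF p F" and kG: "k \<in> MatF p G"
  shows "k \<in> MatF p (F \<inter> G)"
proof -
  have "k \<sigma> \<tau> = (if \<sigma> \<in> cfgs p \<and> \<tau> \<in> cfgs p \<and> (\<forall>s. s \<notin> F \<inter> G \<longrightarrow> \<sigma> s = \<tau> s)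
                 then k (restr \<sigma> (F \<inter> G)) (restr \<tau> (F \<inter> G)) else 0)" for \<sigma> \<tau>
  proof (cases "\<sigma> \<in> cfgs p \<and> \<tau> \<in> cfgs p \<and> (\<forall>s. s \<notin> F \<inter> G \<longrightarrow> \<sigma> s = \<tau> s)")
    case True
    then have cfg: "\<sigma> \<in> cfgs p" "\<tau> \<in> cfgs p" and agree: "\<forall>s. s \<notin> F \<inter> G \<longrightarrow> \<sigma> s = \<tau> s"
      by auto
    have "\<forall>s. s \<notin> G \<longrightarrow> restr \<sigma> F s = restr \<tau> F s"
      using agree unfolding restr_def by auto
    then have "k \<sigma> \<tau> = k (restr (restr \<sigma> F) G) (restr (restr \<tau> F) G)"
      using MatF_eq_restr[OF p kF cfg] MatF_eq_restr[OF p kG] restr_in_cfgs[OF p] cfg agree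
      by auto
    then show ?thesis
      using True by simp
  next
    case False
    then show ?thesis
      using MatF_vanishes[OF kF, of \<sigma> \<tau>] MatF_vanishes[OF kG, of \<sigma> \<tau>] by auto
  qed
  then show ?thesis
    unfolding MatF_def by blast
qed

lemma Supp_subset:
  assumes p: "\<forall>s. p s > 0" and "finite F" and "z \<in> MatF p F"
  shows "Supp p z \<subseteq> F"
proof -
  obtain F0 where F0: "finite F0" "z \<in> MatF p F0"
    and min_card: "\<And>G. finite G \<and> z \<in> MatF p G \<Longrightarrow> card F0 \<le> card G"
    using ex_has_least_nat[of "\<lambda>G. finite G \<and> z \<in> MatF p G" F card] assms(2,3) by blast
  have least: "F0 \<subseteq> G" if "finite G" "z \<in> MatF p G" for G
  proof -
    have "card F0 \<le> card (F0 \<inter> G)"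
      using min_card MatF_Int[OF p F0(2) that(2)] F0(1) by simp
    then have "F0 \<inter> G = F0"
      using F0(1) card_seteq[of F0 "F0 \<inter> G"] by auto
    then show ?thesis by blast
  qed
  have "Supp p z = F0"
    unfolding Supp_def using F0 least by (intro the_equality) blast+
  then show ?thesis
    using least assms(2,3) by blast
qed

lemma Mat_Supp_subset:
  assumes "\<forall>s. p s > 0" and "z \<in> Mat p S"
  shows "Supp p z \<subseteq> S"
  using assms Supp_subset unfolding Mat_def by blast

lemma Supp_scalar:
  assumes "\<forall>s. p s > 0" and "z \<in> scalars p"
  shows "Supp p z = {}"
  using assms Supp_subset[of p "{}" z] unfolding scalars_def by blast

lemma Mat_mono: "T \<subseteq> S \<Longrightarrow> Mat p T \<subseteq> Mat p S"
  unfolding Mat_def by blast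

lemma dinf_commute: "dinf s t = dinf t s"
  unfolding dinf_def by (simp add: abs_minus_commute)

lemma thicken_mono_radius: "l \<le> l' \<Longrightarrow> thicken T l \<subseteq> thicken T l'"
  unfolding thicken_def by force

lemma VS_central_Supp_near_complement:
  assumes p: "\<forall>s. p s > 0" and VS: "VS p A l"
    and z: "z \<in> A \<inter> Mat p S"
    and central: "\<forall>w\<in>A \<inter> Mat p S. commutator p z w = opzero"
  shows "Supp p z \<subseteq> thicken (UNIV - S) l"
proof
  fix s assume s: "s \<in> Supp p z"
  then have "z \<notin> scalars p"
    using Supp_scalar[OF p] by blast
  then obtain w where w: "w \<in> A" "w \<in> Mat p (thicken {s} l)" "commutator p z w \<noteq> opzero"
    using VS z s unfolding VS_def by blast
  have "\<not> thicken {s} l \<subseteq> S"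
    using w central Mat_mono by blast
  then obtain t where "t \<notin> S" "real_of_int (dinf t s) \<le> l"
    unfolding thicken_def by blast
  then show "s \<in> thicken (UNIV - S) l"
    unfolding thicken_def by (auto simp: dinf_commute)
qed

theorem lemma2p3:
  fixes p :: "('d::finite) site \<Rightarrow> nat" and A :: "'d op set" and l :: real
    and S :: "'d site set" and z :: "'d op"
  assumes "\<forall>s. p s > 0"
    and "VS p A l"
    and "z \<in> A \<inter> Mat p S"
    and "\<forall>w\<in>A \<inter> Mat p S. commutator p z w = opzero"
  shows "Supp p z \<subseteq> thicken (UNIV - S) (2 * l) \<inter> S"
proof -
  have "l \<le> 2 * l"
    using assms(2) unfolding VS_def by simp
  then have "Supp p z \<subseteq> thicken (UNIV - S) (2 * l)"
    using VS_central_Supp_near_complement[OF assms] thicken_mono_radius by blast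
  moreover have "Supp p z \<subseteq> S"
    using Mat_Supp_subset[OF assms(1)] assms(3) by blast
  ultimately show ?thesis by blast
qed

end
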